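(* Let $\Gamma$ be a $\mathbb Z^d$-periodic graph and $H=\Delta+Q$ with real $\mathbb Z^d$-periodic $Q$ (notation as in the context). Let $\psi\in\ell^2(V_* )$ be an eigenvector with positive components of $H(0)$ corresponding to its smallest eigenvalue $\lambda_1(0)$. Then: (i) for every $f\in\ell^2(V_* )$ and every $\vartheta\in\mathbb T^d$, $$\big\langle (H(\vartheta)-\lambda_1(0)\mathbb 1)\Psi f,\Psi f\big\rangle_{V_*}=\frac12\sum_{\mathbf e=(v,u)\in\mathcal A_*}c_{uv}\,\big|f(v)-e^{i\langle\tau(\mathbf e),\vartheta\rangle}f(u)\big|^2,\qquad c_{uv}=\frac{\psi(u)\psi(v)}{\sqrt{\varkappa_u\varkappa_v}},$$ where $\mathbb 1$ is the identity and $\Psi$ is the operator of multiplication by $\psi$; (ii) for all $\vartheta\in\mathbb T^d$, $$c_0^{-2}\lambda^{(0)}_1(\vartheta)\le\lambda_1(\vartheta)-\lambda_1(0)\le c_0^2\lambda^{(0)}_1(\vartheta),\qquad c_0=\frac{\psi_+}{\psi_-},\ \ \psi_-=\min_{v\in V_*}\frac{\psi(v)}{\sqrt{\varkappa_v}},\ \ \psi_+=\max_{v\in V_*}\frac{\psi(v)}{\sqrt{\varkappa_v}},$$ where $\lambda_1(\vartheta)$ and $\lambda^{(0)}_1(\vartheta)$ are the smallest eigenvalues of $H(\vartheta)$ and $\Delta(\vartheta)$ respectively.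
   Context: A $\mathbb Z^d$-periodic graph is a connected infinite graph $\Gamma=(V,\mathcal E)$, possibly with loops and multiple edges, on which $\mathbb Z^d$ acts freely by graph automorphisms ($v\mapsto v+m$), with finite vertex degrees and finite quotient graph $\Gamma_*=\Gamma/\mathbb Z^d=(V_*,\mathcal E_* )$. Each undirected edge is regarded as two oppositely oriented edges; $\mathcal A$ is the set of oriented edges, $\mathcal A_*=\mathcal A/\mathbb Z^d$. The degree $\varkappa_v$ is the number of oriented edges starting at $v$. $Q:V\to\mathbb R$ with $Q(v+m)=Q(v)$, viewed also as a function on $V_*$. Fix a subtree of $\Gamma$ whose vertex set $V_0$ consists of $\#V_*$ pairwise non-equivalent vertices; each $v\in V$ is uniquely $v=v_0+[v]$ with $v_0\in V_0$, $[v]\in\mathbb Z^d$; the index of $\mathbf e=(u,v)$ is $\tau(\mathbf e)=[v]-[u]$, defined on $\mathcal A_*$ by shift invariance. For $\vartheta\in\mathbb T^d=\mathbb R^d/(2\pi\mathbb Z)^d$: $(\Delta(\vartheta)f)(v)=f(v)-\sum_{\mathbf e=(v,u)\in\mathcal A_*}\frac{e^{i\langle\tau(\mathbf e),\vartheta\rangle}}{\sqrt{\varkappa_v\varkappa_u}}f(u)$ and $H(\vartheta)=\Delta(\vartheta)+Q$ on $\ell^2(V_* )$, inner product $\langle f_1,f_2\rangle_{V_*}=\sum_{v}f_1(v)\overline{f_2(v)}$. *)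

theory Defs
  imports "HOL-Analysis.Analysis"
begin

text \<open>The quotient graph \<Gamma>_* of a Z^d-periodic graph: vertices of the finite type 'v,
  oriented edges of the finite type 'e (each undirected edge = two oriented edges
  exchanged by the fixed-point-free involution rv), source/target maps src/tgt,
  and the edge index tau :: 'e => int^'d (tau of the reversed edge is minus tau).
  Every vertex has positive degree (the periodic graph is connected and infinite).\<close>

definition periodic_quotient_graph ::
  "('e::finite \<Rightarrow> 'v::finite) \<Rightarrow> ('e \<Rightarrow> 'v) \<Rightarrow> ('e \<Rightarrow> 'e) \<Rightarrow> ('e \<Rightarrow> int^'d) \<Rightarrow> bool" where
  "periodic_quotient_graph src tgt rv tau \<longleftrightarrow>
     (\<forall>e. rv (rv e) = e \<and> rv e \<noteq> e \<and> src (rv e) = tgt e \<and> tgt (rv e) = src e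
          \<and> tau (rv e) = - tau e)
     \<and> (\<forall>v. \<exists>e. src e = v)"

definition deg :: "('e::finite \<Rightarrow> 'v) \<Rightarrow> 'v \<Rightarrow> nat" where
  "deg src v = card {e. src e = v}"

definition ipair :: "int^'d \<Rightarrow> real^'d \<Rightarrow> real" where
  "ipair m \<theta> = (\<Sum>i\<in>UNIV. real_of_int (m $ i) * \<theta> $ i)"

definition fiber_lap ::
  "('e::finite \<Rightarrow> 'v) \<Rightarrow> ('e \<Rightarrow> 'v) \<Rightarrow> ('e \<Rightarrow> int^'d) \<Rightarrow> real^'d \<Rightarrow> ('v \<Rightarrow> complex) \<Rightarrow> ('v \<Rightarrow> complex)" where
  "fiber_lap src tgt tau \<theta> f = (\<lambda>v. f v -
     (\<Sum>e\<in>{e. src e = v}. exp (\<i> * complex_of_real (ipair (tau e) \<theta>))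
        / complex_of_real (sqrt (real (deg src v) * real (deg src (tgt e)))) * f (tgt e)))"

definition fiber_H ::
  "('e::finite \<Rightarrow> 'v) \<Rightarrow> ('e \<Rightarrow> 'v) \<Rightarrow> ('e \<Rightarrow> int^'d) \<Rightarrow> ('v \<Rightarrow> real) \<Rightarrow> real^'d
    \<Rightarrow> ('v \<Rightarrow> complex) \<Rightarrow> ('v \<Rightarrow> complex)" where
  "fiber_H src tgt tau Q \<theta> f = (\<lambda>v. fiber_lap src tgt tau \<theta> f v + complex_of_real (Q v) * f v)"

definition inner_V :: "('v::finite \<Rightarrow> complex) \<Rightarrow> ('v \<Rightarrow> complex) \<Rightarrow> complex" where
  "inner_V f g = (\<Sum>v\<in>UNIV. f v * cnj (g v))"

text \<open>Real eigenvalues of an operator on l^2(V_*) and the smallest one (the operators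
  considered are self-adjoint on a finite-dimensional space, so all eigenvalues are real).\<close>
definition is_eigenvalue :: "(('v \<Rightarrow> complex) \<Rightarrow> ('v \<Rightarrow> complex)) \<Rightarrow> real \<Rightarrow> bool" where
  "is_eigenvalue A mu \<longleftrightarrow> (\<exists>f. f \<noteq> (\<lambda>_. 0) \<and> A f = (\<lambda>v. complex_of_real mu * f v))"

definition smallest_eigenvalue :: "(('v \<Rightarrow> complex) \<Rightarrow> ('v \<Rightarrow> complex)) \<Rightarrow> real" where
  "smallest_eigenvalue A = Min {mu. is_eigenvalue A mu}"

end

theory Submission
  imports Defs
begin

text \<open>Since \<open>H(0) \<psi> = \<lambda>\<^sub>1(0) \<psi>\<close>, the eigenvalue equation at each vertex rewrites
  \<open>\<langle>(H(\<vartheta>) - \<lambda>\<^sub>1(0)) \<psi> f, \<psi> f\<rangle>\<close> as a sum over oriented edges in which the potential no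
  longer appears; symmetrising this sum under edge reversal gives the edge form of (i).
  The Laplacian is the case \<open>Q = 0\<close> with zero-energy ground state \<open>\<surd>\<kappa>\<close>, whose edge weights are all 1.
  Hence both \<open>\<lambda>\<^sub>1(\<vartheta>) - \<lambda>\<^sub>1(0)\<close> and \<open>\<lambda>\<^sup>(\<^sup>0\<^sup>)\<^sub>1(\<vartheta>)\<close> are minima of Rayleigh quotients of edge forms
  in the variable \<open>f\<close>, and since the weights \<open>c\<^sub>u\<^sub>v\<close> and \<open>\<psi>\<^sup>2/\<kappa>\<close> that distinguish the numerators and
  denominators of the two quotients lie in \<open>[\<psi>\<^sub>-\<^sup>2, \<psi>\<^sub>+\<^sup>2]\<close>, the minima are comparable, which is (ii).\<close>

section \<open>Quadratic forms and Rayleigh quotients\<close>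

definition sqnorm_V :: "('v::finite \<Rightarrow> complex) \<Rightarrow> real" where
  "sqnorm_V f = (\<Sum>v\<in>UNIV. (cmod (f v))\<^sup>2)"

lemma inner_V_add_left: "inner_V (\<lambda>v. f v + g v) h = inner_V f h + inner_V g h"
  by (simp add: inner_V_def sum.distrib ring_distribs)

lemma inner_V_add_right: "inner_V h (\<lambda>v. f v + g v) = inner_V h f + inner_V h g"
  by (simp add: inner_V_def sum.distrib ring_distribs)

lemma inner_V_diff_left: "inner_V (\<lambda>v. f v - g v) h = inner_V f h - inner_V g h"
  by (simp add: inner_V_def sum_subtractf ring_distribs)

lemma inner_V_scale_left: "inner_V (\<lambda>v. c * f v) h = c * inner_V f h"
  by (simp add: inner_V_def sum_distrib_left mult.assoc)

lemma inner_V_scale_right: "inner_V h (\<lambda>v. c * f v) = cnj c * inner_V h f"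
  by (simp add: inner_V_def sum_distrib_left algebra_simps)

lemma inner_V_commute: "inner_V g f = cnj (inner_V f g)"
  by (simp add: inner_V_def mult.commute)

lemma inner_V_self: "inner_V f f = complex_of_real (sqnorm_V f)"
  by (simp add: inner_V_def sqnorm_V_def complex_norm_square flip: of_real_power)

lemma sqnorm_V_nonneg: "0 \<le> sqnorm_V f"
  by (simp add: sqnorm_V_def sum_nonneg)

lemma sqnorm_V_eq_0_iff: "sqnorm_V f = 0 \<longleftrightarrow> f = (\<lambda>_. 0)"
  by (auto simp: sqnorm_V_def sum_nonneg_eq_0_iff)

lemma sqnorm_V_pos_iff: "0 < sqnorm_V f \<longleftrightarrow> f \<noteq> (\<lambda>_. 0)"
  using sqnorm_V_nonneg[of f] sqnorm_V_eq_0_iff[of f] by linarith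

lemma sqnorm_V_scale: "sqnorm_V (\<lambda>v. c * f v) = (cmod c)\<^sup>2 * sqnorm_V f"
  by (simp add: sqnorm_V_def sum_distrib_left norm_mult power_mult_distrib)

lemma sqnorm_V_vec: "sqnorm_V (\<lambda>v. x $ v) = (norm x)\<^sup>2"
  by (simp add: norm_vec_def L2_set_def sqnorm_V_def sum_nonneg)

lemma sqnorm_V_mult_mono:
  assumes "\<And>v. cmod (w v) \<le> cmod (w' v)"
  shows "sqnorm_V (\<lambda>v. w v * f v) \<le> sqnorm_V (\<lambda>v. w' v * f v)"
  unfolding sqnorm_V_def norm_mult power_mult_distrib
  by (intro sum_mono mult_right_mono power_mono assms) auto

lemma linear_coeff_eq_0_if_quadratic_nonneg:
  fixes a b :: real
  assumes nonneg: "\<And>t. 0 \<le> a * t + b * t\<^sup>2"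
  shows "a = 0"
proof (rule ccontr)
  assume "a \<noteq> 0"
  define s where "s = \<bar>b\<bar> + 1"
  define t where "t = - a / s"
  have "s > 0" "\<bar>b\<bar> = s - 1"
    by (simp_all add: s_def)
  have "a * t + b * t\<^sup>2 \<le> a * t + \<bar>b\<bar> * t\<^sup>2"
    by (simp add: mult_right_mono)
  also have "\<dots> = - a\<^sup>2 / s\<^sup>2"
    using \<open>s > 0\<close> unfolding \<open>\<bar>b\<bar> = s - 1\<close> t_def
    by (simp add: field_simps power2_eq_square)
  also have "\<dots> < 0"
    using \<open>a \<noteq> 0\<close> by (simp add: s_def)
  finally show False
    using nonneg[of t] by simp
qed

lemma min_ratio_comparison:
  fixes N D N' D' :: "'a \<Rightarrow> real"
  assumes lower: "\<And>x. \<mu> * D x \<le> N x" and attained: "0 < D y" "N y = \<mu> * D y"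
    and lower': "\<And>x. \<mu>' * D' x \<le> N' x" and attained': "0 < D' y'" "N' y' = \<mu>' * D' y'"
    and N'_nonneg: "\<And>x. 0 \<le> N' x"
    and N_pinched: "\<And>x. \<alpha> * N' x \<le> N x" "\<And>x. N x \<le> \<beta> * N' x"
    and D_pinched: "\<And>x. \<alpha> * D' x \<le> D x" "\<And>x. D x \<le> \<beta> * D' x"
    and "0 < \<alpha>"
  shows "\<alpha> / \<beta> * \<mu>' \<le> \<mu> \<and> \<mu> \<le> \<beta> / \<alpha> * \<mu>'"
proof
  have "0 \<le> \<mu>'"
    using attained' N'_nonneg[of y'] by (simp add: zero_le_mult_iff)
  have "0 < \<beta>"
    using D_pinched[of y'] attained'(1) \<open>0 < \<alpha>\<close> by (smt (verit) mult_le_cancel_right_pos)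
  have "\<alpha> * \<mu>' * D y \<le> \<alpha> * \<mu>' * (\<beta> * D' y)"
    using D_pinched(2) \<open>0 < \<alpha>\<close> \<open>0 \<le> \<mu>'\<close> by (simp add: mult_left_mono)
  also have "\<dots> \<le> \<beta> * (\<alpha> * N' y)"
    using lower'[of y] \<open>0 < \<alpha>\<close> \<open>0 < \<beta>\<close> by (simp add: mult_left_mono mult_ac)
  also have "\<dots> \<le> \<beta> * (\<mu> * D y)"
    using N_pinched(1)[of y] attained(2) \<open>0 < \<beta>\<close> by simp
  finally show "\<alpha> / \<beta> * \<mu>' \<le> \<mu>"
    using attained(1) \<open>0 < \<beta>\<close> by (simp add: field_simps mult_le_cancel_right_pos)
  have "0 < D y'"
    using D_pinched(1)[of y'] attained'(1) \<open>0 < \<alpha>\<close> by (smt (verit) mult_pos_pos)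
  have "\<alpha> * (\<mu> * D y') \<le> \<alpha> * (\<beta> * N' y')"
    using lower[of y'] N_pinched(2)[of y'] \<open>0 < \<alpha>\<close> by simp
  also have "\<dots> = \<beta> * \<mu>' * (\<alpha> * D' y')"
    using attained'(2) by simp
  also have "\<dots> \<le> \<beta> * \<mu>' * D y'"
    using D_pinched(1)[of y'] \<open>0 < \<beta>\<close> \<open>0 \<le> \<mu>'\<close> by (simp add: mult_left_mono)
  finally show "\<mu> \<le> \<beta> / \<alpha> * \<mu>'"
    using \<open>0 < D y'\<close> \<open>0 < \<alpha>\<close> by (simp add: field_simps mult_le_cancel_right_pos)
qed

section \<open>The smallest eigenvalue of a Hermitian matrix\<close>

definition matrix_op :: "('v::finite \<Rightarrow> 'v \<Rightarrow> complex) \<Rightarrow> ('v \<Rightarrow> complex) \<Rightarrow> ('v \<Rightarrow> complex)" where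
  "matrix_op M f = (\<lambda>v. \<Sum>w\<in>UNIV. M v w * f w)"

lemma matrix_op_add: "matrix_op M (\<lambda>v. f v + g v) = (\<lambda>v. matrix_op M f v + matrix_op M g v)"
  by (simp add: matrix_op_def sum.distrib ring_distribs)

lemma matrix_op_scale: "matrix_op M (\<lambda>v. c * f v) = (\<lambda>v. c * matrix_op M f v)"
  by (simp add: matrix_op_def sum_distrib_left algebra_simps)

lemma continuous_on_matrix_form:
  "continuous_on S (\<lambda>x::complex^'v::finite. Re (inner_V (matrix_op M (\<lambda>v. x $ v)) (\<lambda>v. x $ v)))"
  unfolding inner_V_def matrix_op_def
  by (intro continuous_intros continuous_on_component continuous_on_id)

locale hermitian_matrix =
  fixes M :: "'v::finite \<Rightarrow> 'v \<Rightarrow> complex"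
  assumes hermitian: "\<And>v w. cnj (M v w) = M w v"
begin

lemma inner_V_matrix_op_adjoint: "inner_V (matrix_op M f) g = inner_V f (matrix_op M g)"
proof -
  have "inner_V (matrix_op M f) g = (\<Sum>v\<in>UNIV. \<Sum>w\<in>UNIV. M v w * f w * cnj (g v))"
    by (simp add: inner_V_def matrix_op_def sum_distrib_right)
  also have "\<dots> = (\<Sum>w\<in>UNIV. \<Sum>v\<in>UNIV. M v w * f w * cnj (g v))"
    by (rule sum.swap)
  also have "\<dots> = inner_V f (matrix_op M g)"
    unfolding inner_V_def matrix_op_def cnj_sum complex_cnj_mult hermitian
    by (simp add: sum_distrib_left mult_ac)
  finally show ?thesis .
qed

lemma matrix_form_scale:
  "Re (inner_V (matrix_op M (\<lambda>v. c * f v)) (\<lambda>v. c * f v))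
     = (cmod c)\<^sup>2 * Re (inner_V (matrix_op M f) f)"
proof -
  have "inner_V (matrix_op M (\<lambda>v. c * f v)) (\<lambda>v. c * f v)
      = (c * cnj c) * inner_V (matrix_op M f) f"
    by (simp add: matrix_op_scale inner_V_scale_left inner_V_scale_right)
  then show ?thesis
    by (simp add: complex_mult_cnj cmod_power2 flip: of_real_power)
qed

lemma matrix_form_min_exists:
  "\<exists>m. (\<forall>f. m * sqnorm_V f \<le> Re (inner_V (matrix_op M f) f))
       \<and> (\<exists>g. g \<noteq> (\<lambda>_. 0) \<and> Re (inner_V (matrix_op M g) g) = m * sqnorm_V g)"
proof -
  define F where "F x = Re (inner_V (matrix_op M (\<lambda>v. x $ v)) (\<lambda>v. x $ v))" for x :: "complex^'v"
  have "sphere (0::complex^'v) 1 \<noteq> {}"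
    by simp
  then obtain x0 where x0: "x0 \<in> sphere 0 1" and min: "\<And>y. y \<in> sphere 0 1 \<Longrightarrow> F x0 \<le> F y"
    using continuous_attains_inf[OF compact_sphere _ continuous_on_matrix_form]
    unfolding F_def by blast
  have "F x0 * sqnorm_V f \<le> Re (inner_V (matrix_op M f) f)" for f
  proof (cases "f = (\<lambda>_. 0)")
    case False
    then have pos: "sqnorm_V f > 0"
      by (simp add: sqnorm_V_pos_iff)
    define c where "c = complex_of_real (1 / sqrt (sqnorm_V f))"
    have c2: "(cmod c)\<^sup>2 * sqnorm_V f = 1"
      using pos by (simp add: c_def norm_divide power_divide)
    define y where "y = (\<chi> v. c * f v)"
    have y: "(\<lambda>v. y $ v) = (\<lambda>v. c * f v)"
      by (simp add: y_def)
    have "(norm y)\<^sup>2 = 1"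
      using c2 by (simp flip: sqnorm_V_vec add: y sqnorm_V_scale)
    then have "y \<in> sphere 0 1"
      using norm_ge_zero[of y] by (simp add: power2_eq_1_iff)
    then have "F x0 \<le> (cmod c)\<^sup>2 * Re (inner_V (matrix_op M f) f)"
      using min[of y] by (simp add: F_def y matrix_form_scale)
    then have "F x0 * sqnorm_V f \<le> Re (inner_V (matrix_op M f) f) * ((cmod c)\<^sup>2 * sqnorm_V f)"
      using pos by (simp add: mult_right_mono mult_ac)
    then show ?thesis
      by (simp add: c2)
  qed (simp add: sqnorm_V_def inner_V_def)
  moreover have "x0 \<noteq> 0"
    using x0 by auto
  then have "(\<lambda>v. x0 $ v) \<noteq> (\<lambda>_. 0)"
    by (simp add: vec_eq_iff fun_eq_iff)
  moreover have "Re (inner_V (matrix_op M (\<lambda>v. x0 $ v)) (\<lambda>v. x0 $ v)) = F x0 * sqnorm_V (\<lambda>v. x0 $ v)"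
    using x0 by (simp add: F_def sqnorm_V_vec)
  ultimately show ?thesis
    by blast
qed

lemma matrix_form_add_scaled:
  "Re (inner_V (matrix_op M (\<lambda>v. g v + complex_of_real t * h v)) (\<lambda>v. g v + complex_of_real t * h v))
   = Re (inner_V (matrix_op M g) g) + 2 * t * Re (inner_V (matrix_op M g) h)
     + t\<^sup>2 * Re (inner_V (matrix_op M h) h)"
proof -
  have "Re (inner_V (matrix_op M h) g) = Re (inner_V (matrix_op M g) h)"
    by (simp add: inner_V_matrix_op_adjoint inner_V_commute[of h "matrix_op M g"])
  then show ?thesis
    by (simp add: matrix_op_add matrix_op_scale inner_V_add_left inner_V_add_right
        inner_V_scale_left inner_V_scale_right power2_eq_square algebra_simps)
qed

lemma nonneg_form_kernel:
  assumes nonneg: "\<And>f. 0 \<le> Re (inner_V (matrix_op M f) f)"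
    and zero: "Re (inner_V (matrix_op M g) g) = 0"
  shows "matrix_op M g = (\<lambda>_. 0)"
proof -
  let ?r = "matrix_op M g"
  have "0 \<le> 2 * sqnorm_V ?r * t + Re (inner_V (matrix_op M ?r) ?r) * t\<^sup>2" for t
    using nonneg[of "\<lambda>v. g v + complex_of_real t * ?r v"]
    by (simp add: matrix_form_add_scaled zero inner_V_self mult_ac)
  then have "2 * sqnorm_V ?r = 0"
    by (rule linear_coeff_eq_0_if_quadratic_nonneg)
  then show ?thesis
    by (simp add: sqnorm_V_eq_0_iff)
qed

lemma hermitian_matrix_shift: "hermitian_matrix (\<lambda>v w. M v w - (if v = w then complex_of_real m else 0))"
  by unfold_locales (simp add: hermitian)

lemma matrix_op_shift:
  "matrix_op (\<lambda>v w. M v w - (if v = w then complex_of_real m else 0)) f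
   = (\<lambda>v. matrix_op M f v - complex_of_real m * f v)"
proof -
  have "(\<Sum>w\<in>UNIV. (if v = w then complex_of_real m else 0) * f w) = complex_of_real m * f v" for v
    by (simp add: if_distrib[of "\<lambda>x. x * _"] cong: if_cong)
  then show ?thesis
    by (simp add: matrix_op_def left_diff_distrib sum_subtractf)
qed

lemma matrix_form_minimizer_eigen:
  assumes lower: "\<And>f. m * sqnorm_V f \<le> Re (inner_V (matrix_op M f) f)"
    and attained: "Re (inner_V (matrix_op M g) g) = m * sqnorm_V g"
  shows "matrix_op M g = (\<lambda>v. complex_of_real m * g v)"
proof -
  interpret shifted: hermitian_matrix "\<lambda>v w. M v w - (if v = w then complex_of_real m else 0)"
    by (rule hermitian_matrix_shift)
  have shifted_form: "Re (inner_V (matrix_op (\<lambda>v w. M v w - (if v = w then complex_of_real m else 0)) f) f)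
      = Re (inner_V (matrix_op M f) f) - m * sqnorm_V f" for f
    by (simp add: matrix_op_shift inner_V_diff_left inner_V_scale_left inner_V_self)
  have "matrix_op (\<lambda>v w. M v w - (if v = w then complex_of_real m else 0)) g = (\<lambda>_. 0)"
    using lower attained by (intro shifted.nonneg_form_kernel) (simp_all add: shifted_form)
  then show ?thesis
    by (simp add: matrix_op_shift fun_eq_iff)
qed

lemma eigenvectors_orthogonal:
  assumes "matrix_op M f = (\<lambda>v. complex_of_real \<mu> * f v)"
    and "matrix_op M g = (\<lambda>v. complex_of_real \<nu> * g v)"
    and "\<mu> \<noteq> \<nu>"
  shows "inner_V f g = 0"
proof -
  have "complex_of_real \<mu> * inner_V f g = complex_of_real \<nu> * inner_V f g"
    using inner_V_matrix_op_adjoint[of f g] assms(1,2)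
    by (simp add: inner_V_scale_left inner_V_scale_right)
  then show ?thesis
    using assms(3) by simp
qed

lemma finite_eigenvalues: "finite {\<mu>. is_eigenvalue (matrix_op M) \<mu>}"
proof -
  define E where "E = {\<mu>. is_eigenvalue (matrix_op M) \<mu>}"
  obtain ev where ev: "\<And>\<mu>. \<mu> \<in> E \<Longrightarrow>
      ev \<mu> \<noteq> (\<lambda>_. 0) \<and> matrix_op M (ev \<mu>) = (\<lambda>v. complex_of_real \<mu> * ev \<mu> v)"
    using bchoice[of E "\<lambda>\<mu> f. f \<noteq> (\<lambda>_. 0) \<and> matrix_op M f = (\<lambda>v. complex_of_real \<mu> * f v)"]
    unfolding E_def is_eigenvalue_def by auto
  define vec :: "('v \<Rightarrow> complex) \<Rightarrow> complex^'v" where "vec f = (\<chi> v. f v)" for f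
  have inner_vec: "inner (vec f) (vec g) = Re (inner_V f g)" for f g
    by (simp add: vec_def inner_vec_def inner_V_def inner_complex_def)
  have vec_inject: "vec f = vec g \<longleftrightarrow> f = g" for f g
    by (simp add: vec_def vec_eq_iff fun_eq_iff)
  have vec_zero: "vec (\<lambda>_. 0) = 0"
    by (simp add: vec_def vec_eq_iff)
  have ev_inj: "inj_on (vec \<circ> ev) E"
  proof (rule inj_onI)
    fix \<mu> \<nu> assume "\<mu> \<in> E" "\<nu> \<in> E" "(vec \<circ> ev) \<mu> = (vec \<circ> ev) \<nu>"
    then have "ev \<mu> = ev \<nu>" "ev \<mu> \<noteq> (\<lambda>_. 0)"
      using ev by (auto simp: vec_inject)
    then obtain v where "ev \<mu> v \<noteq> 0"
      by auto
    moreover have "complex_of_real \<mu> * ev \<mu> v = complex_of_real \<nu> * ev \<mu> v"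
      using ev[OF \<open>\<mu> \<in> E\<close>] ev[OF \<open>\<nu> \<in> E\<close>] \<open>ev \<mu> = ev \<nu>\<close> by metis
    ultimately show "\<mu> = \<nu>"
      by simp
  qed
  have "pairwise orthogonal ((vec \<circ> ev) ` E)"
    unfolding pairwise_def orthogonal_def
  proof clarsimp
    fix \<mu> \<nu> assume "\<mu> \<in> E" "\<nu> \<in> E" "vec (ev \<mu>) \<noteq> vec (ev \<nu>)"
    then have "\<mu> \<noteq> \<nu>"
      by auto
    then show "inner (vec (ev \<mu>)) (vec (ev \<nu>)) = 0"
      using ev[OF \<open>\<mu> \<in> E\<close>] ev[OF \<open>\<nu> \<in> E\<close>] eigenvectors_orthogonal by (simp add: inner_vec)
  qed
  moreover have "0 \<notin> (vec \<circ> ev) ` E"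
    using ev vec_inject vec_zero by (metis comp_apply imageE)
  ultimately have "finite ((vec \<circ> ev) ` E)"
    using pairwise_orthogonal_independent independent_bound by blast
  then show ?thesis
    using finite_imageD ev_inj unfolding E_def by blast
qed

lemma smallest_eigenvalue_eq_form_min:
  assumes lower: "\<And>f. m * sqnorm_V f \<le> Re (inner_V (matrix_op M f) f)"
    and attained: "g \<noteq> (\<lambda>_. 0)" "Re (inner_V (matrix_op M g) g) = m * sqnorm_V g"
  shows "smallest_eigenvalue (matrix_op M) = m"
  unfolding smallest_eigenvalue_def
proof (rule Min_eqI[OF finite_eigenvalues])
  show "m \<in> {\<mu>. is_eigenvalue (matrix_op M) \<mu>}"
    using attained matrix_form_minimizer_eigen[OF lower] by (auto simp: is_eigenvalue_def)
next
  fix \<mu> assume "\<mu> \<in> {\<mu>. is_eigenvalue (matrix_op M) \<mu>}"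
  then obtain f where "f \<noteq> (\<lambda>_. 0)" "matrix_op M f = (\<lambda>v. complex_of_real \<mu> * f v)"
    by (auto simp: is_eigenvalue_def)
  then show "m \<le> \<mu>"
    using lower[of f] by (simp add: inner_V_scale_left inner_V_self sqnorm_V_pos_iff)
qed

theorem smallest_eigenvalue_matrix_op:
  shows smallest_eigenvalue_le_form:
      "\<And>f. smallest_eigenvalue (matrix_op M) * sqnorm_V f \<le> Re (inner_V (matrix_op M f) f)"
    and is_eigenvalue_smallest: "is_eigenvalue (matrix_op M) (smallest_eigenvalue (matrix_op M))"
proof -
  obtain m g where lower: "\<And>f. m * sqnorm_V f \<le> Re (inner_V (matrix_op M f) f)"
    and "g \<noteq> (\<lambda>_. 0)" "Re (inner_V (matrix_op M g) g) = m * sqnorm_V g"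
    using matrix_form_min_exists by blast
  moreover from this have "smallest_eigenvalue (matrix_op M) = m"
    by (rule smallest_eigenvalue_eq_form_min)
  ultimately show "\<And>f. smallest_eigenvalue (matrix_op M) * sqnorm_V f \<le> Re (inner_V (matrix_op M f) f)"
    "is_eigenvalue (matrix_op M) (smallest_eigenvalue (matrix_op M))"
    using matrix_form_minimizer_eigen[OF lower] by (auto simp: is_eigenvalue_def)
qed

end

section \<open>Fiber operators and edge forms\<close>

lemma cmod_diff_unimodular_sq:
  assumes "cmod E = 1"
  shows "complex_of_real ((cmod (a - E * b))\<^sup>2)
    = (complex_of_real ((cmod a)\<^sup>2) - E * b * cnj a) + (complex_of_real ((cmod b)\<^sup>2) - cnj E * a * cnj b)"
proof -
  have "E * cnj E = 1"
    using assms complex_norm_square[of E] by simp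
  have "complex_of_real ((cmod (a - E * b))\<^sup>2) = (a - E * b) * cnj (a - E * b)"
    by (rule complex_norm_square)
  also have "\<dots> = (a * cnj a - E * b * cnj a) + ((E * cnj E) * (b * cnj b) - cnj E * a * cnj b)"
    by (simp add: algebra_simps)
  finally show ?thesis
    by (simp only: complex_norm_square \<open>E * cnj E = 1\<close> mult_1_left)
qed

locale periodic_quotient =
  fixes src tgt :: "'e::finite \<Rightarrow> 'v::finite" and rv :: "'e \<Rightarrow> 'e" and tau :: "'e \<Rightarrow> int^'d"
  assumes graph: "periodic_quotient_graph src tgt rv tau"
begin

lemma rv_rv [simp]: "rv (rv e) = e"
  and src_rv [simp]: "src (rv e) = tgt e"
  and tgt_rv [simp]: "tgt (rv e) = src e"
  and tau_rv [simp]: "tau (rv e) = - tau e"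
  using graph unfolding periodic_quotient_graph_def by auto

lemma deg_pos: "0 < deg src v"
proof -
  obtain e where "src e = v"
    using graph unfolding periodic_quotient_graph_def by blast
  then show ?thesis
    unfolding deg_def by (auto simp: card_gt_0_iff)
qed

lemma sum_edges_rv: "(\<Sum>e\<in>UNIV. g e) = (\<Sum>e\<in>UNIV. g (rv e))"
  by (rule sum.reindex_bij_witness[of _ rv rv]) auto

lemma sum_out_edges: "(\<Sum>v\<in>UNIV. \<Sum>e\<in>{e. src e = v}. g e) = (\<Sum>e\<in>UNIV. g e)"
  using sum.group[of UNIV UNIV src g] by simp

definition phase :: "real^'d \<Rightarrow> 'e \<Rightarrow> complex" where
  "phase \<theta> e = exp (\<i> * complex_of_real (ipair (tau e) \<theta>))"

lemma cnj_phase: "cnj (phase \<theta> e) = phase \<theta> (rv e)"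
  by (simp add: phase_def exp_cnj ipair_def sum_negf)

lemma norm_phase: "cmod (phase \<theta> e) = 1"
  by (simp add: phase_def)

lemma phase_zero: "phase 0 e = 1"
  by (simp add: phase_def ipair_def)

definition edge_form :: "('e \<Rightarrow> real) \<Rightarrow> real^'d \<Rightarrow> ('v \<Rightarrow> complex) \<Rightarrow> real" where
  "edge_form c \<theta> f = (1/2) * (\<Sum>e\<in>UNIV. c e * (cmod (f (src e) - phase \<theta> e * f (tgt e)))\<^sup>2)"

lemma edge_form_mono: "(\<And>e. c e \<le> c' e) \<Longrightarrow> edge_form c \<theta> f \<le> edge_form c' \<theta> f"
  unfolding edge_form_def by (intro mult_left_mono sum_mono mult_right_mono) auto

lemma edge_form_const: "edge_form (\<lambda>_. s) \<theta> f = s * edge_form (\<lambda>_. 1) \<theta> f"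
  by (simp add: edge_form_def sum_distrib_left)

lemma edge_form_nonneg: "(\<And>e. 0 \<le> c e) \<Longrightarrow> 0 \<le> edge_form c \<theta> f"
  unfolding edge_form_def by (intro mult_nonneg_nonneg sum_nonneg) auto

lemma edge_form_symmetrize:
  assumes "\<And>e. c (rv e) = c e"
  shows "(\<Sum>e\<in>UNIV. complex_of_real (c e)
            * (complex_of_real ((cmod (f (src e)))\<^sup>2) - phase \<theta> e * f (tgt e) * cnj (f (src e))))
         = complex_of_real (edge_form c \<theta> f)"
proof -
  define T where "T e = complex_of_real (c e)
      * (complex_of_real ((cmod (f (src e)))\<^sup>2) - phase \<theta> e * f (tgt e) * cnj (f (src e)))" for e
  have "complex_of_real (c e * (cmod (f (src e) - phase \<theta> e * f (tgt e)))\<^sup>2) = T e + T (rv e)" for e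
    unfolding T_def of_real_mult cmod_diff_unimodular_sq[OF norm_phase]
    by (simp add: assms algebra_simps flip: cnj_phase)
  then have "complex_of_real (2 * edge_form c \<theta> f) = (\<Sum>e\<in>UNIV. T e + T (rv e))"
    unfolding edge_form_def of_real_sum by simp
  also have "\<dots> = 2 * (\<Sum>e\<in>UNIV. T e)"
    by (simp add: sum.distrib flip: sum_edges_rv)
  finally show ?thesis
    unfolding T_def by simp
qed

definition hop :: "real^'d \<Rightarrow> 'e \<Rightarrow> complex" where
  "hop \<theta> e = phase \<theta> e / complex_of_real (sqrt (real (deg src (src e)) * real (deg src (tgt e))))"

lemma cnj_hop: "cnj (hop \<theta> e) = hop \<theta> (rv e)"
  by (simp add: hop_def cnj_phase mult.commute)

lemma hop_eq_phase_mult: "hop \<theta> e = phase \<theta> e * hop 0 e"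
  by (simp add: hop_def phase_zero)

lemma fiber_H_apply:
  "fiber_H src tgt tau Q \<theta> f v = complex_of_real (1 + Q v) * f v - (\<Sum>e\<in>{e. src e = v}. hop \<theta> e * f (tgt e))"
  unfolding fiber_H_def fiber_lap_def hop_def phase_def
  by (simp add: algebra_simps)

definition fiber_matrix :: "('v \<Rightarrow> real) \<Rightarrow> real^'d \<Rightarrow> 'v \<Rightarrow> 'v \<Rightarrow> complex" where
  "fiber_matrix Q \<theta> v w = (if v = w then complex_of_real (1 + Q v) else 0)
     - (\<Sum>e\<in>{e. src e = v \<and> tgt e = w}. hop \<theta> e)"

lemma hermitian_fiber_matrix: "hermitian_matrix (fiber_matrix Q \<theta>)"
proof
  fix v w
  have "cnj (\<Sum>e\<in>{e. src e = v \<and> tgt e = w}. hop \<theta> e) = (\<Sum>e\<in>{e. src e = v \<and> tgt e = w}. hop \<theta> (rv e))"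
    by (simp add: cnj_hop)
  also have "\<dots> = (\<Sum>e\<in>{e. src e = w \<and> tgt e = v}. hop \<theta> e)"
    by (rule sum.reindex_bij_witness[of _ rv rv]) auto
  finally show "cnj (fiber_matrix Q \<theta> v w) = fiber_matrix Q \<theta> w v"
    by (simp add: fiber_matrix_def)
qed

lemma fiber_H_eq_matrix_op: "fiber_H src tgt tau Q \<theta> = matrix_op (fiber_matrix Q \<theta>)"
proof (intro ext)
  fix f v
  have diag: "(\<Sum>w\<in>UNIV. (if v = w then complex_of_real (1 + Q v) else 0) * f w) = complex_of_real (1 + Q v) * f v"
    by (simp add: if_distrib[of "\<lambda>x. x * _"] cong: if_cong)
  have "(\<Sum>w\<in>UNIV. (\<Sum>e\<in>{e. src e = v \<and> tgt e = w}. hop \<theta> e) * f w)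
      = (\<Sum>w\<in>UNIV. \<Sum>e\<in>{e \<in> {e. src e = v}. tgt e = w}. hop \<theta> e * f (tgt e))"
    by (simp add: sum_distrib_right conj_commute)
  also have "\<dots> = (\<Sum>e\<in>{e. src e = v}. hop \<theta> e * f (tgt e))"
    by (rule sum.group) auto
  finally show "fiber_H src tgt tau Q \<theta> f v = matrix_op (fiber_matrix Q \<theta>) f v"
    by (simp add: matrix_op_def fiber_matrix_def fiber_H_apply left_diff_distrib sum_subtractf diag)
qed

lemma fiber_lap_eq_fiber_H: "fiber_lap src tgt tau \<theta> = fiber_H src tgt tau (\<lambda>_. 0) \<theta>"
  by (intro ext) (simp add: fiber_H_def)

lemma smallest_eigenvalue_fiber_H_le_form:
  "smallest_eigenvalue (fiber_H src tgt tau Q \<theta>) * sqnorm_V f \<le> Re (inner_V (fiber_H src tgt tau Q \<theta> f) f)"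
  unfolding fiber_H_eq_matrix_op by (rule hermitian_matrix.smallest_eigenvalue_le_form[OF hermitian_fiber_matrix])

lemma is_eigenvalue_smallest_fiber_H:
  "is_eigenvalue (fiber_H src tgt tau Q \<theta>) (smallest_eigenvalue (fiber_H src tgt tau Q \<theta>))"
  unfolding fiber_H_eq_matrix_op by (rule hermitian_matrix.is_eigenvalue_smallest[OF hermitian_fiber_matrix])

section \<open>Ground state representation and eigenvalue comparison\<close>

definition ground_conductance :: "('v \<Rightarrow> real) \<Rightarrow> 'e \<Rightarrow> real" where
  "ground_conductance \<psi> e
     = \<psi> (tgt e) * \<psi> (src e) / sqrt (real (deg src (tgt e)) * real (deg src (src e)))"

lemma ground_conductance_rv: "ground_conductance \<psi> (rv e) = ground_conductance \<psi> e"
  by (simp add: ground_conductance_def mult.commute)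

lemma ground_state_local:
  assumes eig: "fiber_H src tgt tau Q 0 (\<lambda>v. complex_of_real (\<psi> v)) = (\<lambda>v. complex_of_real (L * \<psi> v))"
  shows "(fiber_H src tgt tau Q \<theta> (\<lambda>w. complex_of_real (\<psi> w) * f w) v
            - complex_of_real L * (complex_of_real (\<psi> v) * f v)) * cnj (complex_of_real (\<psi> v) * f v)
         = (\<Sum>e\<in>{e. src e = v}. complex_of_real (ground_conductance \<psi> e)
              * (complex_of_real ((cmod (f (src e)))\<^sup>2) - phase \<theta> e * f (tgt e) * cnj (f (src e))))"
proof -
  \<comment> \<open>The eigenvalue equation at \<open>v\<close> trades the diagonal term for the hopping terms at \<open>\<vartheta> = 0\<close>.\<close>
  have "complex_of_real (1 + Q v - L) * complex_of_real (\<psi> v)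
      = (\<Sum>e\<in>{e. src e = v}. hop 0 e * complex_of_real (\<psi> (tgt e)))"
    using fun_cong[OF eig, of v] by (simp add: fiber_H_apply algebra_simps)
  then have "fiber_H src tgt tau Q \<theta> (\<lambda>w. complex_of_real (\<psi> w) * f w) v
            - complex_of_real L * (complex_of_real (\<psi> v) * f v)
      = (\<Sum>e\<in>{e. src e = v}. hop 0 e * complex_of_real (\<psi> (tgt e)) * (f v - phase \<theta> e * f (tgt e)))"
    by (simp add: fiber_H_apply hop_eq_phase_mult[of \<theta>] algebra_simps sum_distrib_left
        sum_distrib_right sum_subtractf)
  then have "(fiber_H src tgt tau Q \<theta> (\<lambda>w. complex_of_real (\<psi> w) * f w) v
            - complex_of_real L * (complex_of_real (\<psi> v) * f v)) * cnj (complex_of_real (\<psi> v) * f v)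
      = (\<Sum>e\<in>{e. src e = v}. hop 0 e * complex_of_real (\<psi> (tgt e)) * (f v - phase \<theta> e * f (tgt e))
            * cnj (complex_of_real (\<psi> v) * f v))"
    by (simp add: sum_distrib_right)
  also have "\<dots> = (\<Sum>e\<in>{e. src e = v}. complex_of_real (ground_conductance \<psi> e)
              * (complex_of_real ((cmod (f (src e)))\<^sup>2) - phase \<theta> e * f (tgt e) * cnj (f (src e))))"
  proof (rule sum.cong[OF refl])
    fix e assume "e \<in> {e. src e = v}"
    then have "v = src e"
      by simp
    have "complex_of_real (ground_conductance \<psi> e)
        = hop 0 e * complex_of_real (\<psi> (tgt e)) * complex_of_real (\<psi> (src e))"
      by (simp add: hop_def phase_zero ground_conductance_def mult.commute)
    then show "hop 0 e * complex_of_real (\<psi> (tgt e)) * (f v - phase \<theta> e * f (tgt e))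
            * cnj (complex_of_real (\<psi> v) * f v)
        = complex_of_real (ground_conductance \<psi> e)
              * (complex_of_real ((cmod (f (src e)))\<^sup>2) - phase \<theta> e * f (tgt e) * cnj (f (src e)))"
      unfolding \<open>v = src e\<close> complex_norm_square by (simp add: algebra_simps)
  qed
  finally show ?thesis .
qed

theorem ground_state_representation:
  assumes eig: "fiber_H src tgt tau Q 0 (\<lambda>v. complex_of_real (\<psi> v)) = (\<lambda>v. complex_of_real (L * \<psi> v))"
  shows "inner_V (\<lambda>v. fiber_H src tgt tau Q \<theta> (\<lambda>w. complex_of_real (\<psi> w) * f w) v
                  - complex_of_real L * (complex_of_real (\<psi> v) * f v))
            (\<lambda>w. complex_of_real (\<psi> w) * f w)
         = complex_of_real (edge_form (ground_conductance \<psi>) \<theta> f)"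
  unfolding inner_V_def ground_state_local[OF eig] sum_out_edges
  by (rule edge_form_symmetrize) (rule ground_conductance_rv)

lemma laplacian_ground_state:
  "fiber_H src tgt tau (\<lambda>_. 0) 0 (\<lambda>v. complex_of_real (sqrt (deg src v)))
     = (\<lambda>v. complex_of_real (0 * sqrt (deg src v)))"
proof
  fix v
  have "hop 0 e * complex_of_real (sqrt (deg src (tgt e))) = complex_of_real (1 / sqrt (deg src v))"
    if "src e = v" for e
    using that deg_pos[of "tgt e"] by (simp add: hop_def phase_zero real_sqrt_mult)
  then have "(\<Sum>e\<in>{e. src e = v}. hop 0 e * complex_of_real (sqrt (deg src (tgt e))))
      = complex_of_real (deg src v / sqrt (deg src v))"
    by (simp add: deg_def)
  also have "deg src v / sqrt (deg src v) = sqrt (deg src v)"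
    by (simp add: real_div_sqrt)
  finally show "fiber_H src tgt tau (\<lambda>_. 0) 0 (\<lambda>v. complex_of_real (sqrt (deg src v))) v
      = complex_of_real (0 * sqrt (deg src v))"
    by (simp add: fiber_H_apply)
qed

lemma ground_conductance_sqrt_deg: "ground_conductance (\<lambda>v. sqrt (deg src v)) = (\<lambda>_. 1)"
  using deg_pos by (simp add: fun_eq_iff ground_conductance_def real_sqrt_mult)

lemma smallest_eigenvalue_fiber_H_attained:
  assumes "\<And>v. w v \<noteq> 0"
  shows "\<exists>f. 0 < sqnorm_V (\<lambda>v. w v * f v)
    \<and> Re (inner_V (fiber_H src tgt tau Q \<theta> (\<lambda>v. w v * f v)) (\<lambda>v. w v * f v))
        = smallest_eigenvalue (fiber_H src tgt tau Q \<theta>) * sqnorm_V (\<lambda>v. w v * f v)"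
proof -
  obtain g where "g \<noteq> (\<lambda>_. 0)"
    and g: "fiber_H src tgt tau Q \<theta> g = (\<lambda>v. complex_of_real (smallest_eigenvalue (fiber_H src tgt tau Q \<theta>)) * g v)"
    using is_eigenvalue_smallest_fiber_H unfolding is_eigenvalue_def by blast
  moreover have "(\<lambda>v. w v * (g v / w v)) = g"
    using assms by simp
  ultimately show ?thesis
    by (intro exI[of _ "\<lambda>v. g v / w v"]) (simp add: inner_V_scale_left inner_V_self sqnorm_V_pos_iff)
qed

lemma ground_form_rayleigh:
  assumes eig: "fiber_H src tgt tau Q 0 (\<lambda>v. complex_of_real (\<psi> v)) = (\<lambda>v. complex_of_real (L * \<psi> v))"
    and nonzero: "\<And>v. \<psi> v \<noteq> 0"
  shows "(smallest_eigenvalue (fiber_H src tgt tau Q \<theta>) - L) * sqnorm_V (\<lambda>v. complex_of_real (\<psi> v) * f v)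
           \<le> edge_form (ground_conductance \<psi>) \<theta> f"
    and "\<exists>f. 0 < sqnorm_V (\<lambda>v. complex_of_real (\<psi> v) * f v)
           \<and> edge_form (ground_conductance \<psi>) \<theta> f
               = (smallest_eigenvalue (fiber_H src tgt tau Q \<theta>) - L) * sqnorm_V (\<lambda>v. complex_of_real (\<psi> v) * f v)"
proof -
  have form_eq: "edge_form (ground_conductance \<psi>) \<theta> f
    = Re (inner_V (fiber_H src tgt tau Q \<theta> (\<lambda>w. complex_of_real (\<psi> w) * f w)) (\<lambda>w. complex_of_real (\<psi> w) * f w))
      - L * sqnorm_V (\<lambda>w. complex_of_real (\<psi> w) * f w)" for f
    using arg_cong[OF ground_state_representation[OF eig, of \<theta> f], of Re]
    by (simp add: inner_V_diff_left inner_V_scale_left inner_V_self)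
  show "(smallest_eigenvalue (fiber_H src tgt tau Q \<theta>) - L) * sqnorm_V (\<lambda>v. complex_of_real (\<psi> v) * f v)
      \<le> edge_form (ground_conductance \<psi>) \<theta> f"
    using smallest_eigenvalue_fiber_H_le_form[of Q \<theta> "\<lambda>v. complex_of_real (\<psi> v) * f v"]
    by (simp add: form_eq left_diff_distrib)
  show "\<exists>f. 0 < sqnorm_V (\<lambda>v. complex_of_real (\<psi> v) * f v)
      \<and> edge_form (ground_conductance \<psi>) \<theta> f
          = (smallest_eigenvalue (fiber_H src tgt tau Q \<theta>) - L) * sqnorm_V (\<lambda>v. complex_of_real (\<psi> v) * f v)"
    using smallest_eigenvalue_fiber_H_attained[of "\<lambda>v. complex_of_real (\<psi> v)" Q \<theta>] nonzero
    by (simp add: form_eq left_diff_distrib)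
qed

lemma ground_form_pinched:
  assumes lower: "\<And>v. m \<le> \<psi> v / sqrt (deg src v)" and upper: "\<And>v. \<psi> v / sqrt (deg src v) \<le> M"
    and "0 \<le> m"
  shows "m\<^sup>2 * edge_form (\<lambda>_. 1) \<theta> f \<le> edge_form (ground_conductance \<psi>) \<theta> f"
    and "edge_form (ground_conductance \<psi>) \<theta> f \<le> M\<^sup>2 * edge_form (\<lambda>_. 1) \<theta> f"
proof -
  define a where "a v = \<psi> v / sqrt (deg src v)" for v
  have a_bounds: "m \<le> a v" "a v \<le> M" "0 \<le> a v" for v
    using lower upper \<open>0 \<le> m\<close> order_trans[OF \<open>0 \<le> m\<close> lower] by (simp_all add: a_def)
  have "ground_conductance \<psi> e = a (tgt e) * a (src e)" for e
    by (simp add: a_def ground_conductance_def real_sqrt_mult)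
  then have "m * m \<le> ground_conductance \<psi> e" "ground_conductance \<psi> e \<le> M * M" for e
    using a_bounds \<open>0 \<le> m\<close> order_trans[OF a_bounds(3) a_bounds(2)] by (simp_all add: mult_mono)
  then show "m\<^sup>2 * edge_form (\<lambda>_. 1) \<theta> f \<le> edge_form (ground_conductance \<psi>) \<theta> f"
    and "edge_form (ground_conductance \<psi>) \<theta> f \<le> M\<^sup>2 * edge_form (\<lambda>_. 1) \<theta> f"
    by (simp_all add: edge_form_mono power2_eq_square flip: edge_form_const)
qed

lemma ground_weight_pinched:
  assumes lower: "\<And>v. m \<le> \<psi> v / sqrt (deg src v)" and upper: "\<And>v. \<psi> v / sqrt (deg src v) \<le> M"
    and "0 \<le> m"
  shows "m\<^sup>2 * sqnorm_V (\<lambda>v. complex_of_real (sqrt (deg src v)) * f v)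
           \<le> sqnorm_V (\<lambda>v. complex_of_real (\<psi> v) * f v)"
    and "sqnorm_V (\<lambda>v. complex_of_real (\<psi> v) * f v)
           \<le> M\<^sup>2 * sqnorm_V (\<lambda>v. complex_of_real (sqrt (deg src v)) * f v)"
proof -
  let ?k = "\<lambda>v. complex_of_real (sqrt (deg src v))"
  have scaled: "sqnorm_V (\<lambda>v. complex_of_real c * ?k v * f v) = c\<^sup>2 * sqnorm_V (\<lambda>v. ?k v * f v)" for c
    using sqnorm_V_scale[of "complex_of_real c" "\<lambda>v. ?k v * f v"] by (simp add: mult.assoc)
  have "0 < sqrt (deg src v)" "0 \<le> \<psi> v / sqrt (deg src v)" for v
    using deg_pos order_trans[OF \<open>0 \<le> m\<close> lower] by simp_all
  then have "m * sqrt (deg src v) \<le> \<psi> v" "\<psi> v \<le> M * sqrt (deg src v)" "0 \<le> \<psi> v" "0 \<le> M" for v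
    using lower[of v] upper[of v] order_trans[OF _ upper] by (simp_all add: field_simps)
  then have weight: "cmod (complex_of_real m * ?k v) \<le> cmod (complex_of_real (\<psi> v))"
    "cmod (complex_of_real (\<psi> v)) \<le> cmod (complex_of_real M * ?k v)" for v
    using \<open>0 \<le> m\<close> by (simp_all add: norm_mult)
  have "sqnorm_V (\<lambda>v. complex_of_real m * ?k v * f v) \<le> sqnorm_V (\<lambda>v. complex_of_real (\<psi> v) * f v)"
    "sqnorm_V (\<lambda>v. complex_of_real (\<psi> v) * f v) \<le> sqnorm_V (\<lambda>v. complex_of_real M * ?k v * f v)"
    by (rule sqnorm_V_mult_mono, rule weight)+
  then show "m\<^sup>2 * sqnorm_V (\<lambda>v. ?k v * f v) \<le> sqnorm_V (\<lambda>v. complex_of_real (\<psi> v) * f v)"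
    "sqnorm_V (\<lambda>v. complex_of_real (\<psi> v) * f v) \<le> M\<^sup>2 * sqnorm_V (\<lambda>v. ?k v * f v)"
    unfolding scaled .
qed

theorem smallest_eigenvalue_comparison:
  assumes eig: "fiber_H src tgt tau Q 0 (\<lambda>v. complex_of_real (\<psi> v)) = (\<lambda>v. complex_of_real (L * \<psi> v))"
    and lower: "\<And>v. m \<le> \<psi> v / sqrt (deg src v)" and upper: "\<And>v. \<psi> v / sqrt (deg src v) \<le> M"
    and "0 < m"
  shows "(m / M)\<^sup>2 * smallest_eigenvalue (fiber_lap src tgt tau \<theta>)
           \<le> smallest_eigenvalue (fiber_H src tgt tau Q \<theta>) - L
    \<and> smallest_eigenvalue (fiber_H src tgt tau Q \<theta>) - L
           \<le> (M / m)\<^sup>2 * smallest_eigenvalue (fiber_lap src tgt tau \<theta>)"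
proof -
  have "\<psi> v \<noteq> 0" "sqrt (deg src v) \<noteq> 0" for v
    using lower[of v] \<open>0 < m\<close> deg_pos[of v] by auto
  note H_rayleigh = ground_form_rayleigh[OF eig this(1)]
    and lap_rayleigh = ground_form_rayleigh[OF laplacian_ground_state this(2),
      unfolded ground_conductance_sqrt_deg, folded fiber_lap_eq_fiber_H, simplified]
  obtain f1 where "0 < sqnorm_V (\<lambda>v. complex_of_real (\<psi> v) * f1 v)"
    "edge_form (ground_conductance \<psi>) \<theta> f1
       = (smallest_eigenvalue (fiber_H src tgt tau Q \<theta>) - L) * sqnorm_V (\<lambda>v. complex_of_real (\<psi> v) * f1 v)"
    using H_rayleigh(2) by blast
  moreover obtain f2 where "0 < sqnorm_V (\<lambda>v. complex_of_real (sqrt (deg src v)) * f2 v)"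
    "edge_form (\<lambda>_. 1) \<theta> f2
       = smallest_eigenvalue (fiber_lap src tgt tau \<theta>) * sqnorm_V (\<lambda>v. complex_of_real (sqrt (deg src v)) * f2 v)"
    using lap_rayleigh(2) by blast
  ultimately have "m\<^sup>2 / M\<^sup>2 * smallest_eigenvalue (fiber_lap src tgt tau \<theta>)
           \<le> smallest_eigenvalue (fiber_H src tgt tau Q \<theta>) - L
    \<and> smallest_eigenvalue (fiber_H src tgt tau Q \<theta>) - L
           \<le> M\<^sup>2 / m\<^sup>2 * smallest_eigenvalue (fiber_lap src tgt tau \<theta>)"
    using \<open>0 < m\<close> ground_form_pinched[OF lower upper] ground_weight_pinched[OF lower upper]
    by (intro min_ratio_comparison[where N = "edge_form (ground_conductance \<psi>) \<theta>"
          and D = "\<lambda>f. sqnorm_V (\<lambda>v. complex_of_real (\<psi> v) * f v)" and N' = "edge_form (\<lambda>_. 1) \<theta>"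
          and D' = "\<lambda>f. sqnorm_V (\<lambda>v. complex_of_real (sqrt (deg src v)) * f v)"]
        H_rayleigh(1) lap_rayleigh(1) edge_form_nonneg) auto
  then show ?thesis
    by (simp add: power_divide)
qed

end

theorem lemma4p2:
  fixes src tgt :: "'e::finite \<Rightarrow> 'v::finite"
    and rv :: "'e \<Rightarrow> 'e"
    and tau :: "'e \<Rightarrow> int^'d"
    and Q :: "'v \<Rightarrow> real"
    and \<psi> :: "'v \<Rightarrow> real"
  assumes G: "periodic_quotient_graph src tgt rv tau"
    and pos: "\<forall>v. \<psi> v > 0"
    and eig: "fiber_H src tgt tau Q 0 (\<lambda>v. complex_of_real (\<psi> v))
              = (\<lambda>v. complex_of_real (smallest_eigenvalue (fiber_H src tgt tau Q 0) * \<psi> v))"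
  shows "(\<forall>f \<theta>. inner_V
            (\<lambda>v. fiber_H src tgt tau Q \<theta> (\<lambda>w. complex_of_real (\<psi> w) * f w) v
                  - complex_of_real (smallest_eigenvalue (fiber_H src tgt tau Q 0))
                    * (complex_of_real (\<psi> v) * f v))
            (\<lambda>w. complex_of_real (\<psi> w) * f w)
          = complex_of_real ((1/2) * (\<Sum>e\<in>UNIV.
              \<psi> (tgt e) * \<psi> (src e) / sqrt (real (deg src (tgt e)) * real (deg src (src e)))
              * (cmod (f (src e) - exp (\<i> * complex_of_real (ipair (tau e) \<theta>)) * f (tgt e)))\<^sup>2)))
       \<and> (let \<psi>m = Min (range (\<lambda>v. \<psi> v / sqrt (real (deg src v))));
              \<psi>p = Max (range (\<lambda>v. \<psi> v / sqrt (real (deg src v))));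
              c0 = \<psi>p / \<psi>m
          in \<forall>\<theta>. c0 powi (-2) * smallest_eigenvalue (fiber_lap src tgt tau \<theta>)
                   \<le> smallest_eigenvalue (fiber_H src tgt tau Q \<theta>)
                     - smallest_eigenvalue (fiber_H src tgt tau Q 0)
               \<and> smallest_eigenvalue (fiber_H src tgt tau Q \<theta>)
                     - smallest_eigenvalue (fiber_H src tgt tau Q 0)
                   \<le> c0\<^sup>2 * smallest_eigenvalue (fiber_lap src tgt tau \<theta>))"
proof -
  interpret periodic_quotient src tgt rv tau
    by (rule periodic_quotient.intro[OF G])
  define a where "a v = \<psi> v / sqrt (real (deg src v))" for v
  have "0 < Min (range a)"
    using Min_in[of "range a"] pos deg_pos by (auto simp: a_def)
  then have "(Min (range a) / Max (range a))\<^sup>2 * smallest_eigenvalue (fiber_lap src tgt tau \<theta>)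
        \<le> smallest_eigenvalue (fiber_H src tgt tau Q \<theta>) - smallest_eigenvalue (fiber_H src tgt tau Q 0)
      \<and> smallest_eigenvalue (fiber_H src tgt tau Q \<theta>) - smallest_eigenvalue (fiber_H src tgt tau Q 0)
        \<le> (Max (range a) / Min (range a))\<^sup>2 * smallest_eigenvalue (fiber_lap src tgt tau \<theta>)" for \<theta>
    by (intro smallest_eigenvalue_comparison[OF eig]) (simp_all add: a_def)
  then show ?thesis
    using ground_state_representation[OF eig]
    by (simp add: a_def Let_def edge_form_def ground_conductance_def phase_def power_int_minus power_divide)
qed

end
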